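(* Let $\rho:\mathcal G\to G$ be a morphism of flat affine group schemes over $R$ which induces an isomorphism $\mathcal G_K\to G_K$ on generic fibres. Put $G_0=G$ and $\rho_0=\rho$. Inductively, having $\rho_n:\mathcal G\to G_n$, let $G_{n+1}\to G_n$ be the Neron blowup of $G_n$ at the closed subgroup scheme $\mathrm{Im}(\rho_n\otimes k)\subset G_n\otimes k$ (the schematic image of $\rho_n\otimes k$), and let $\rho_{n+1}:\mathcal G\to G_{n+1}$ be the morphism through which $\rho_n$ factors (by the universal property of the Neron blowup). Then $\varprojlim_n\rho_n:\mathcal G\to\varprojlim_n G_n$ is an isomorphism. (No finite type hypothesis is needed.)
   Context: $R$ is a discrete valuation ring with uniformizer $\pi$, fraction field $K$, residue field $k$. For a flat affine group scheme $G$ over $R$ we regard $R[G]\subset K[G]$. For a closed subgroup $H_0\subset G\otimes k$ with ideal $J\subset R[G]$ (inverse image of its ideal in $k[G]$), the Neron blowup $G'$ of $G$ at $H_0$ is $\mathrm{Spec}$ of the subring of $K[G]$ generated by $R[G]$ and $\pi^{-1}J$. Universal property: if $\mathcal G\to G$ is a morphism of flat affine group schemes with $\mathcal G_k\to G_k$ factoring through $H_0$, it factors uniquely through $G'\to G$. The sequence $\cdots\to G_1\to G_0$ in the claim is called the standard blowup sequence of $\mathcal G\to G$. *)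

theory Defs
  imports Main
begin

(* Everything lives inside an ambient commutative ring, playing the role of
  the coordinate ring K[G] = K[\<G>] of the common generic fibre.
  Coordinate rings of flat affine R-schemes with that generic fibre are
  identified with R-subalgebras of the ambient ring (R[G] is a subring of K[G]). *)

definition is_subring :: "'a::comm_ring_1 set \<Rightarrow> bool" where
  "is_subring S \<longleftrightarrow> 1 \<in> S \<and> (\<forall>x\<in>S. \<forall>y\<in>S. x + y \<in> S \<and> x - y \<in> S \<and> x * y \<in> S)"

definition subring_gen :: "'a::comm_ring_1 set \<Rightarrow> 'a set" where
  "subring_gen S = \<Inter>{T. S \<subseteq> T \<and> is_subring T}"

definition is_unit_in :: "'a::comm_ring_1 set \<Rightarrow> 'a \<Rightarrow> bool" where
  "is_unit_in S u \<longleftrightarrow> u \<in> S \<and> (\<exists>v\<in>S. u * v = 1)"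

definition is_subfield :: "'a::comm_ring_1 set \<Rightarrow> bool" where
  "is_subfield K \<longleftrightarrow> is_subring K \<and> (\<forall>x\<in>K. x \<noteq> 0 \<longrightarrow> is_unit_in K x)"

definition is_dvr_with_frac :: "'a::comm_ring_1 set \<Rightarrow> 'a set \<Rightarrow> 'a \<Rightarrow> bool" where
  "is_dvr_with_frac R K \<pi> \<longleftrightarrow>
     is_subfield K \<and> is_subring R \<and> R \<subseteq> K \<and> \<pi> \<in> R \<and> \<pi> \<noteq> 0 \<and> \<not> is_unit_in R \<pi> \<and>
     (\<forall>x\<in>K. x \<noteq> 0 \<longrightarrow> (\<exists>u n. is_unit_in R u \<and> (x = u * \<pi> ^ n \<or> x * \<pi> ^ n = u)))"

(* Ideal of the schematic image of \<rho>_n \<otimes> k, pulled back to R[G_n]: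
  the kernel of R[G_n] \<rightarrow> k[G_n] \<rightarrow> k[\<G>] = R[\<G>]/\<pi>R[\<G>], where
  \<rho>_n^* : R[G_n] \<rightarrow> R[\<G>] is the inclusion of subrings of K[G]. *)
definition image_ideal :: "'a::comm_ring_1 \<Rightarrow> 'a set \<Rightarrow> 'a set \<Rightarrow> 'a set" where
  "image_ideal \<pi> An B = {a \<in> An. \<exists>b\<in>B. a = \<pi> * b}"

(* Neron blowup: subring of K[G] generated by R[G] and \<pi>^-1 J
  (\<pi> is invertible in the ambient ring, so \<pi>^-1 J = {x. \<pi> x \<in> J}). *)
definition neron_blowup :: "'a::comm_ring_1 \<Rightarrow> 'a set \<Rightarrow> 'a set \<Rightarrow> 'a set" where
  "neron_blowup \<pi> A J = subring_gen (A \<union> {x. \<pi> * x \<in> J})"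

fun std_blowup_seq :: "'a::comm_ring_1 \<Rightarrow> 'a set \<Rightarrow> 'a set \<Rightarrow> nat \<Rightarrow> 'a set" where
  "std_blowup_seq \<pi> A B 0 = A"
| "std_blowup_seq \<pi> A B (Suc n) =
     neron_blowup \<pi> (std_blowup_seq \<pi> A B n) (image_ideal \<pi> (std_blowup_seq \<pi> A B n) B)"

end

theory Submission
  imports Defs
begin

text \<open>Each Neron blowup adjoins every \<open>b \<in> R[\<G>]\<close> with \<open>\<pi> b\<close> already in the current
  ring, so \<open>\<pi>\<^sup>k b \<in> R[G\<^sub>n]\<close> gives \<open>b \<in> R[G\<^sub>n\<^sub>+\<^sub>k]\<close>; as the generic fibres agree, some
  \<open>\<pi>\<^sup>m b\<close> lies in \<open>R[G]\<close>, so the union exhausts \<open>R[\<G>]\<close>. Conversely, since \<open>\<pi>\<close> is invertible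
  in \<open>K[G]\<close>, dividing by \<open>\<pi>\<close> never leaves \<open>R[\<G>]\<close>, so every \<open>R[G\<^sub>n]\<close> stays inside it.\<close>

lemma subring_gen_superset: "S \<subseteq> subring_gen S"
  unfolding subring_gen_def by blast

lemma subring_gen_least: "S \<subseteq> T \<Longrightarrow> is_subring T \<Longrightarrow> subring_gen S \<subseteq> T"
  unfolding subring_gen_def by blast

lemma is_subring_power_closed: "is_subring B \<Longrightarrow> p \<in> B \<Longrightarrow> p ^ k \<in> B"
  by (induction k) (auto simp: is_subring_def)

lemma mult_left_cancel_invertible:
  fixes \<pi> :: "'a::comm_ring_1"
  assumes "\<pi> * y = 1" and "\<pi> * x = \<pi> * b"
  shows "x = b"
proof -
  have "y * (\<pi> * x) = y * (\<pi> * b)" using assms(2) by simp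
  then show ?thesis using assms(1) by (metis mult.assoc mult.commute mult_1)
qed

lemma neron_blowup_image_ideal_subset:
  assumes "is_subring B" "A \<subseteq> B" "\<pi> * y = 1"
  shows "neron_blowup \<pi> A (image_ideal \<pi> A B) \<subseteq> B"
proof -
  have "{x. \<pi> * x \<in> image_ideal \<pi> A B} \<subseteq> B"
    using mult_left_cancel_invertible[OF assms(3)] unfolding image_ideal_def by blast
  then show ?thesis
    unfolding neron_blowup_def using assms(1,2) by (intro subring_gen_least Un_least)
qed

lemma mem_neron_blowup_image_ideal:
  assumes "b \<in> B" "\<pi> * b \<in> A"
  shows "b \<in> neron_blowup \<pi> A (image_ideal \<pi> A B)"
  unfolding neron_blowup_def image_ideal_def using assms
  by (intro subsetD[OF subring_gen_superset]) blast

lemma std_blowup_seq_subset: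
  assumes "is_subring B" "A \<subseteq> B" "\<pi> * y = 1"
  shows "std_blowup_seq \<pi> A B n \<subseteq> B"
  by (induction n) (simp_all add: assms(2) neron_blowup_image_ideal_subset[OF assms(1) _ assms(3)])

lemma std_blowup_seq_mem_add:
  assumes B: "is_subring B" "\<pi> \<in> B"
    and b: "b \<in> B" "\<pi> ^ k * b \<in> std_blowup_seq \<pi> A B n"
  shows "b \<in> std_blowup_seq \<pi> A B (n + k)"
  using b(2)
proof (induction k arbitrary: n)
  case 0
  then show ?case by simp
next
  case (Suc k)
  have "\<pi> ^ k * b \<in> B"
    using is_subring_power_closed[OF B] b(1) B(1) unfolding is_subring_def by blast
  moreover have "\<pi> * (\<pi> ^ k * b) \<in> std_blowup_seq \<pi> A B n"
    using Suc.prems by (simp add: mult.assoc)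
  ultimately have "\<pi> ^ k * b \<in> std_blowup_seq \<pi> A B (Suc n)"
    by (simp add: mem_neron_blowup_image_ideal)
  from Suc.IH[OF this] show ?case by simp
qed

theorem theorem2p11:
  fixes R K A B :: "'a::comm_ring_1 set" and \<pi> :: 'a
  assumes dvr: "is_dvr_with_frac R K \<pi>"
    and K_units: "\<forall>x\<in>K. x \<noteq> 0 \<longrightarrow> (\<exists>y. x * y = 1)"
    and A: "is_subring A" "R \<subseteq> A"
    and B: "is_subring B" "R \<subseteq> B"
    and rho: "A \<subseteq> B"
    and generic: "\<forall>x. \<exists>m. \<pi> ^ m * x \<in> A"
  shows "(\<Union>n. std_blowup_seq \<pi> A B n) = B"
proof
  have \<pi>: "\<pi> \<in> R" "\<pi> \<in> K" "\<pi> \<noteq> 0"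
    using dvr unfolding is_dvr_with_frac_def by auto
  then obtain y where "\<pi> * y = 1" using K_units by blast
  then show "(\<Union>n. std_blowup_seq \<pi> A B n) \<subseteq> B"
    using std_blowup_seq_subset[OF B(1) rho] by blast
  show "B \<subseteq> (\<Union>n. std_blowup_seq \<pi> A B n)"
  proof
    fix b assume "b \<in> B"
    obtain m where "\<pi> ^ m * b \<in> std_blowup_seq \<pi> A B 0" using generic by auto
    then have "b \<in> std_blowup_seq \<pi> A B (0 + m)"
      using std_blowup_seq_mem_add[OF B(1) _ \<open>b \<in> B\<close>] \<pi>(1) B(2) by blast
    then show "b \<in> (\<Union>n. std_blowup_seq \<pi> A B n)" by blast
  qed
qed

end
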